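(* Let $G$ be a $2K_2$-free graph, let $a,b$ be adjacent vertices of $G$, and let $X$ be a minimal dominating set of $G$ with $a,b\in X$ and $|X|>\alpha(G)$. Let $N$ be the set of vertices not in $\{a,b\}$ adjacent to at least one of $a,b$ and let $Y=X\cap N$. If $|Y|>1$, then every vertex of $Y$ is adjacent to both $a$ and $b$.
   Context: All graphs are finite, simple and undirected. $2K_2$-free means no induced subgraph isomorphic to the disjoint union of two edges. $\alpha(G)$ is the maximum size of an independent set of $G$. A dominating set is a vertex set $D$ such that every vertex outside $D$ has a neighbour in $D$; it is minimal if no proper subset is dominating. *)

theory Defs
  imports Main
begin

definition graph :: "'a set \<Rightarrow> ('a \<Rightarrow> 'a \<Rightarrow> bool) \<Rightarrow> bool" where
  "graph V E \<longleftrightarrow> finite V \<and> (\<forall>x y. E x y \<longrightarrow> x \<in> V \<and> y \<in> V)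
     \<and> (\<forall>x y. E x y \<longrightarrow> E y x) \<and> (\<forall>x. \<not> E x x)"

definition two_K2_free :: "'a set \<Rightarrow> ('a \<Rightarrow> 'a \<Rightarrow> bool) \<Rightarrow> bool" where
  "two_K2_free V E \<longleftrightarrow> \<not> (\<exists>a\<in>V. \<exists>b\<in>V. \<exists>c\<in>V. \<exists>d\<in>V.
      distinct [a, b, c, d] \<and> E a b \<and> E c d \<and>
      \<not> E a c \<and> \<not> E a d \<and> \<not> E b c \<and> \<not> E b d)"

definition independent_set :: "'a set \<Rightarrow> ('a \<Rightarrow> 'a \<Rightarrow> bool) \<Rightarrow> 'a set \<Rightarrow> bool" where
  "independent_set V E S \<longleftrightarrow> S \<subseteq> V \<and> (\<forall>x\<in>S. \<forall>y\<in>S. \<not> E x y)"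

definition alpha :: "'a set \<Rightarrow> ('a \<Rightarrow> 'a \<Rightarrow> bool) \<Rightarrow> nat" where
  "alpha V E = Max (card ` {S. independent_set V E S})"

definition dominating_set :: "'a set \<Rightarrow> ('a \<Rightarrow> 'a \<Rightarrow> bool) \<Rightarrow> 'a set \<Rightarrow> bool" where
  "dominating_set V E D \<longleftrightarrow> D \<subseteq> V \<and> (\<forall>v\<in>V - D. \<exists>u\<in>D. E v u)"

definition minimal_dominating_set :: "'a set \<Rightarrow> ('a \<Rightarrow> 'a \<Rightarrow> bool) \<Rightarrow> 'a set \<Rightarrow> bool" where
  "minimal_dominating_set V E D \<longleftrightarrow> dominating_set V E D \<and>
     (\<forall>D'. D' \<subset> D \<longrightarrow> \<not> dominating_set V E D')"

end

theory Submission
  imports Defs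
begin

text \<open>
  Each vertex of a minimal dominating set X that has a neighbour in X owns a private
  neighbour outside X. For private neighbours p, q of two vertices of X, 2K2-freeness
  forces p and q to be adjacent when their owners are not, and forbids it when an edge
  of X avoids both owners. Suppose y in X is adjacent to a but not to b, and y' is a
  further neighbour of the edge ab in X. Playing these two facts against each other on
  the private neighbours of a, b, y, y' yields a contradiction in every case.
\<close>

definition private_neighbour ::
    "'a set \<Rightarrow> ('a \<Rightarrow> 'a \<Rightarrow> bool) \<Rightarrow> 'a set \<Rightarrow> 'a \<Rightarrow> 'a \<Rightarrow> bool" where
  "private_neighbour V E X x p \<longleftrightarrow> p \<in> V - X \<and> E p x \<and> (\<forall>u\<in>X - {x}. \<not> E p u)"

lemma graph_sym: "graph V E \<Longrightarrow> E u v \<Longrightarrow> E v u"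
  unfolding graph_def by blast

lemma graph_irrefl: "graph V E \<Longrightarrow> E u v \<Longrightarrow> u \<noteq> v"
  unfolding graph_def by blast

lemma two_K2_freeD:
  assumes "two_K2_free V E" "a \<in> V" "b \<in> V" "c \<in> V" "d \<in> V"
    and "distinct [a, b, c, d]" "E a b" "E c d"
  shows "E a c \<or> E a d \<or> E b c \<or> E b d"
  using assms unfolding two_K2_free_def by blast

lemma minimal_dominating_set_private_neighbour:
  assumes g: "graph V E" and m: "minimal_dominating_set V E X"
    and "x \<in> X" "z \<in> X" "E x z"
  obtains p where "private_neighbour V E X x p"
proof -
  have dom: "dominating_set V E X" and "\<not> dominating_set V E (X - {x})"
    using m \<open>x \<in> X\<close> unfolding minimal_dominating_set_def by auto
  then obtain v where v: "v \<in> V" "v \<notin> X - {x}" "\<forall>u\<in>X - {x}. \<not> E v u"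
    unfolding dominating_set_def by blast
  have "v \<noteq> x"
    using v(3) \<open>z \<in> X\<close> \<open>E x z\<close> graph_irrefl[OF g \<open>E x z\<close>] by auto
  with v have "v \<notin> X" by auto
  with dom v obtain u where "u \<in> X" "E v u"
    unfolding dominating_set_def by blast
  with v \<open>v \<notin> X\<close> have "private_neighbour V E X x v"
    unfolding private_neighbour_def by auto
  then show thesis by (rule that)
qed

lemma private_neighbours_distinct:
  "private_neighbour V E X u p \<Longrightarrow> private_neighbour V E X v q \<Longrightarrow> u \<in> X \<Longrightarrow> u \<noteq> v
    \<Longrightarrow> p \<noteq> q"
  unfolding private_neighbour_def by blast

lemma private_neighbours_adjacent:
  assumes g: "graph V E" and f: "two_K2_free V E" and "X \<subseteq> V"
    and "u \<in> X" "v \<in> X" "u \<noteq> v" "\<not> E u v"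
    and p: "private_neighbour V E X u p" and q: "private_neighbour V E X v q"
  shows "E p q"
proof -
  have "p \<noteq> q"
    using private_neighbours_distinct[OF p q] \<open>u \<in> X\<close> \<open>u \<noteq> v\<close> .
  then have "E u v \<or> E u q \<or> E p v \<or> E p q"
    using assms by (intro two_K2_freeD[OF f]) (auto simp: private_neighbour_def intro: graph_sym[OF g])
  with assms graph_sym[OF g] show ?thesis
    unfolding private_neighbour_def by blast
qed

lemma private_neighbours_nonadjacent:
  assumes g: "graph V E" and f: "two_K2_free V E" and "X \<subseteq> V"
    and "u \<in> X" "v \<in> X" "E u v" "w \<notin> {u, v}" "z \<notin> {u, v}"
    and p: "private_neighbour V E X w p" and q: "private_neighbour V E X z q"
  shows "\<not> E p q"
proof
  assume "E p q"
  then have "E u p \<or> E u q \<or> E v p \<or> E v q"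
    using assms graph_irrefl[OF g] by (intro two_K2_freeD[OF f]) (auto simp: private_neighbour_def)
  with assms graph_sym[OF g] show False
    unfolding private_neighbour_def by blast
qed

lemma minimal_dominating_one_sided_neighbour_unique:
  assumes g: "graph V E" and f: "two_K2_free V E" and m: "minimal_dominating_set V E X"
    and "a \<in> X" "b \<in> X" "E a b"
    and y: "y \<in> X - {a, b}" "E y a" "\<not> E y b"
    and y': "y' \<in> X - {a, b}" "E y' a \<or> E y' b"
  shows "y' = y"
proof (rule ccontr)
  assume "y' \<noteq> y"
  have XV: "X \<subseteq> V"
    using m unfolding minimal_dominating_set_def dominating_set_def by blast
  note has_private = minimal_dominating_set_private_neighbour[OF g m]
  note sym = graph_sym[OF g]
  note adjacent = private_neighbours_adjacent[OF g f XV]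
  note nonadjacent = private_neighbours_nonadjacent[OF g f XV]
  obtain pa where pa: "private_neighbour V E X a pa"
    using has_private \<open>a \<in> X\<close> \<open>b \<in> X\<close> \<open>E a b\<close> .
  obtain pb where pb: "private_neighbour V E X b pb"
    using has_private \<open>b \<in> X\<close> \<open>a \<in> X\<close> sym[OF \<open>E a b\<close>] .
  obtain py where py: "private_neighbour V E X y py"
    using has_private y \<open>a \<in> X\<close> by blast
  obtain py' where py': "private_neighbour V E X y' py'"
    using has_private y' \<open>a \<in> X\<close> \<open>b \<in> X\<close> by blast
  have "E py pb" using adjacent y pb py \<open>b \<in> X\<close> by blast
  consider "E y' a" | "E y' b" "\<not> E y y'" | "E y' b" "E y y'" "\<not> E y' a"
    using y' by blast
  then show False
  proof cases
    case 1
    then show False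
      using nonadjacent[OF \<open>a \<in> X\<close> _ sym[OF 1] _ _ py pb] y y' \<open>y' \<noteq> y\<close> \<open>E py pb\<close> by blast
  next
    case 2
    then have "E py py'" using adjacent y y' py py' \<open>y' \<noteq> y\<close> by blast
    then show False
      using nonadjacent[OF \<open>a \<in> X\<close> \<open>b \<in> X\<close> \<open>E a b\<close> _ _ py py'] y y' by blast
  next
    case 3
    have distinct_owners: "distinct [y, b, a, y']" using y y' \<open>y' \<noteq> y\<close> by auto
    have "E pa py'" using adjacent \<open>a \<in> X\<close> y' pa py' 3(3) sym by blast
    have "distinct [py, pb, pa, py']"
      using private_neighbours_distinct[OF py pb] private_neighbours_distinct[OF py pa]
        private_neighbours_distinct[OF py py'] private_neighbours_distinct[OF pb pa]
        private_neighbours_distinct[OF pb py'] private_neighbours_distinct[OF pa py']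
        distinct_owners y y' \<open>a \<in> X\<close> \<open>b \<in> X\<close>
      by auto
    then have "E py pa \<or> E py py' \<or> E pb pa \<or> E pb py'"
      using two_K2_freeD[OF f] \<open>E py pb\<close> \<open>E pa py'\<close> py pb pa py'
      unfolding private_neighbour_def by blast
    moreover have "\<not> E py pa"
      using nonadjacent[OF \<open>b \<in> X\<close> _ sym[OF 3(1)] _ _ py pa] distinct_owners y' by auto
    moreover have "\<not> E py py'"
      using nonadjacent[OF \<open>a \<in> X\<close> \<open>b \<in> X\<close> \<open>E a b\<close> _ _ py py'] y y' by blast
    moreover have "\<not> E pb pa"
      using nonadjacent[OF _ _ 3(2) _ _ pb pa] y y' distinct_owners by auto
    moreover have "\<not> E pb py'"
      using nonadjacent[OF \<open>a \<in> X\<close> _ sym[OF y(2)] _ _ pb py'] y y' \<open>y' \<noteq> y\<close> by auto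
    ultimately show False by blast
  qed
qed

theorem claim4:
  fixes V :: "'a set" and E :: "'a \<Rightarrow> 'a \<Rightarrow> bool" and a b :: 'a and X :: "'a set"
  assumes "graph V E"
    and "two_K2_free V E"
    and "a \<in> V" and "b \<in> V" and "E a b"
    and "minimal_dominating_set V E X"
    and "a \<in> X" and "b \<in> X"
    and "card X > alpha V E"
    and "card (X \<inter> {v \<in> V - {a, b}. E v a \<or> E v b}) > 1"
  shows "\<forall>y \<in> X \<inter> {v \<in> V - {a, b}. E v a \<or> E v b}. E y a \<and> E y b"
proof
  let ?Y = "X \<inter> {v \<in> V - {a, b}. E v a \<or> E v b}"
  fix y assume y: "y \<in> ?Y"
  have "\<not> ?Y \<subseteq> {y}"
    using card_mono[of "{y}" ?Y] assms(10) by auto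
  then obtain y' where y': "y' \<in> ?Y" "y' \<noteq> y" by blast
  note unique = minimal_dominating_one_sided_neighbour_unique[OF assms(1,2,6)]
  show "E y a \<and> E y b"
  proof (rule ccontr)
    assume "\<not> (E y a \<and> E y b)"
    then consider "E y a" "\<not> E y b" | "E y b" "\<not> E y a" using y by blast
    then show False
    proof cases
      case 1
      then show False using unique[OF assms(7,8,5)] y y' by blast
    next
      case 2
      then show False using unique[OF assms(8,7) graph_sym[OF assms(1,5)]] y y' by blast
    qed
  qed
qed

end
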